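(* Let $F(\theta)$ be the vertical federated learning (SplitNN) training objective over the concatenated parameter vector $\theta=(\theta_1,\dots,\theta_K)$, where $\theta_k$ is the parameter block of party $k\in\{1,\dots,K\}$ (clients $1,\dots,K-1$ and server $K$), and assume $F(\theta)\ge 0$ for all $\theta$. Suppose: (i) ($L$-smoothness) for all $x,y$, $F(y)\le F(x)+\langle\nabla F(x),y-x\rangle+\frac{L}{2}\|y-x\|^2$; (ii) (variance) for each $k$, the mini-batch gradient $\nabla_{\theta_k}\mathcal{L}$ is an unbiased estimate of $\nabla_{\theta_k}F(\theta)$ and $\mathbb{E}\|\nabla_{\theta_k}\mathcal{L}-\nabla_{\theta_k}F(\theta)\|^2\le\Gamma$; (iii) (perturbation) for each $k$, the adversarially perturbed gradient $\nabla^a_{\theta_k}\mathcal{L}$ satisfies $\mathbb{E}\|\nabla^a_{\theta_k}\mathcal{L}-\nabla_{\theta_k}\mathcal{L}\|^2\le\delta(\rho)$, where $\delta(\rho)\ge 0$ is a constant depending on a connectivity parameter $\rho$ of the adversaries' graph. Consider the backdoored iterates $\theta_k^{(t+1)}=\theta_k^{(t)}-\eta^{(t)}\nabla^a_{\theta_k^{(t)}}\mathcal{L}$ for all $k$ and $t=0,1,\dots,T-1$, with common learning rates $\eta_1^{(t)}=\dots=\eta_K^{(t)}=\eta^{(t)}$ satisfying $0<\eta^{(t)}\le\frac{1}{4L}$. Then \[ \min_{t\in\{0,\dots,T-1\}}\mathbb{E}\|\nabla F(\theta^{(t)})\|^2\le 4\frac{F(\theta^{(0)})}{\sum_{t=0}^{T-1}\eta^{(t)}}+4\frac{\sum_{t=0}^{T-1}(\eta^{(t)})^2}{\sum_{t=0}^{T-1}\eta^{(t)}}\bigl(KL\Gamma+KL\delta(\rho)\bigr)+2K\delta(\rho).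 \]
   Context: Vertical federated learning setting: a dataset of $N$ samples whose features are partitioned among clients $k=1,\dots,K-1$; client $k$ has an embedding model $f_k(\cdot;\theta_k)$ and the server $K$ holds the labels and a top model $\phi_K(\cdot;\theta_K)$. The objective is $F(\theta)=\frac1N\sum_{i=1}^N\mathcal{L}\bigl(y_i,\phi_K(\{f_k(x_k^{(i)};\theta_k)\}_{k=1}^{K-1};\theta_K)\bigr)$ with a loss $\mathcal{L}$ (e.g. cross-entropy). In each round a mini-batch is sampled and $\nabla_{\theta_k}\mathcal{L}$ denotes the mini-batch gradient with respect to block $\theta_k$; adversarial (backdoor) clients cause the gradients actually used in updates to be perturbed versions $\nabla^a_{\theta_k}\mathcal{L}$. Expectations are over mini-batch sampling and the perturbation. *)

theory Defs
  imports "HOL-Probability.Probability"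
begin

text \<open>The full parameter vector theta lives in a Euclidean space 'p. The block
structure theta = (theta_1, ..., theta_K) is given by a map own assigning each
standard basis vector (coordinate) to the party owning it. block_proj own k x
is the k-th block of x (embedded back into 'p, other coordinates zero).\<close>

definition block_proj :: "('p::euclidean_space \<Rightarrow> nat) \<Rightarrow> nat \<Rightarrow> 'p \<Rightarrow> 'p" where
  "block_proj own k x = (\<Sum>b\<in>Basis. if own b = k then (x \<bullet> b) *\<^sub>R b else 0)"

text \<open>G is an unbiased estimate of h(X): G is integrable and its conditional
expectation given the current iterate X equals h(X) almost surely
(coordinatewise, since conditional expectation in the library is real-valued).\<close>

definition cond_unbiased ::
  "'a measure \<Rightarrow> ('a \<Rightarrow> 'p) \<Rightarrow> ('a \<Rightarrow> 'p::euclidean_space) \<Rightarrow> ('p \<Rightarrow> 'p) \<Rightarrow> bool" where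
  "cond_unbiased M X G h \<longleftrightarrow>
     (\<forall>b\<in>Basis. integrable M (\<lambda>\<omega>. G \<omega> \<bullet> b) \<and>
       (AE \<omega> in M. real_cond_exp M (vimage_algebra (space M) X borel) (\<lambda>\<omega>. G \<omega> \<bullet> b) \<omega>
                    = h (X \<omega>) \<bullet> b))"

end

theory Submission
  imports Defs
begin

text \<open>Write a for the true gradient at the current iterate, e for the sampling error and d for the
adversarial perturbation, so that the update direction is a + e + d. Smoothness together with
2 a\<bullet>d \<ge> -|a|^2 - |d|^2 and |a + e + d|^2 \<le> 2|a + e|^2 + 2|d|^2 bounds the decrease of F along one
step pointwise. In expectation the cross term a\<bullet>e vanishes, because a is a function of the current
iterate and e has conditional mean zero given it; the squared norms of e and d split into K block
contributions, each bounded by \<Gamma> resp. \<delta>(\<rho>). With L \<eta> \<le> 1/4 this leaves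
\<eta>/4 E|\<nabla>F(\<theta>_t)|^2 \<le> E F(\<theta>_t) - E F(\<theta>_t+1) + L \<eta>^2 K (\<Gamma> + \<delta>) + \<eta>/2 K \<delta>;
summing over t, telescoping, using F \<ge> 0 and bounding the weighted average from below by the minimum
gives the claim.\<close>

lemma borel_measurable_gradient:
  fixes F :: "'p::euclidean_space \<Rightarrow> real"
  assumes grad: "\<forall>x. GDERIV F x :> gradF x"
  shows "F \<in> borel_measurable borel" and "gradF \<in> borel_measurable borel"
proof -
  have "continuous_on UNIV F"
    using grad by (meson continuous_at_imp_continuous_on has_derivative_continuous gderiv_def)
  then show F_meas[measurable]: "F \<in> borel_measurable borel"
    by (rule borel_measurable_continuous_onI)
  have "filterlim (\<lambda>n. inverse (real (Suc n))) (at_right 0) sequentially"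
    by (rule tendsto_imp_filterlim_at_right) (use LIMSEQ_inverse_real_of_nat in auto)
  then have h_lim: "filterlim (\<lambda>n. inverse (real (Suc n))) (at 0) sequentially"
    by (rule filterlim_mono) (auto simp: at_within_le_at)
  \<comment> \<open>each partial derivative is a pointwise limit of measurable difference quotients\<close>
  have "(\<lambda>x. gradF x \<bullet> b) \<in> borel_measurable borel" if "b \<in> Basis" for b
  proof (rule borel_measurable_LIMSEQ_real)
    fix x :: 'p
    have "((\<lambda>t. x + t *\<^sub>R b) has_derivative (\<lambda>t. t *\<^sub>R b)) (at 0)"
      by (auto intro!: derivative_eq_intros)
    moreover have "(F has_derivative (\<lambda>h. h \<bullet> gradF x)) (at (x + 0 *\<^sub>R b))"
      using grad by (simp add: gderiv_def)
    ultimately have "((\<lambda>t. F (x + t *\<^sub>R b)) has_derivative (\<lambda>t. (t *\<^sub>R b) \<bullet> gradF x)) (at 0)"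
      by (rule has_derivative_compose)
    then have "((\<lambda>t. F (x + t *\<^sub>R b)) has_field_derivative (gradF x \<bullet> b)) (at 0)"
      by (simp add: has_field_derivative_def inner_commute mult.commute[of _ "b \<bullet> gradF x"])
    then have "((\<lambda>h. (F (x + h *\<^sub>R b) - F x) / h) \<longlongrightarrow> gradF x \<bullet> b) (at 0)"
      by (simp add: DERIV_def)
    from filterlim_compose[OF this h_lim]
    show "(\<lambda>n. (F (x + inverse (real (Suc n)) *\<^sub>R b) - F x) / inverse (real (Suc n)))
        \<longlonglongrightarrow> gradF x \<bullet> b"
      by simp
  qed measurable
  then show "gradF \<in> borel_measurable borel"
    by (subst borel_measurable_euclidean_space) auto
qed

lemma inner_block_proj:
  assumes "b \<in> Basis"
  shows "block_proj own k x \<bullet> b = (if own b = k then x \<bullet> b else 0)"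
proof -
  have "block_proj own k x \<bullet> b = (\<Sum>c\<in>Basis. if c = b \<and> own b = k then x \<bullet> b else 0)"
    unfolding block_proj_def inner_sum_left
    using assms by (intro sum.cong) (auto simp: inner_Basis)
  then show ?thesis
    using assms by (simp add: sum.delta)
qed

lemma block_proj_diff: "block_proj own k (x - y) = block_proj own k x - block_proj own k y"
  unfolding block_proj_def sum_subtractf[symmetric]
  by (intro sum.cong) (auto simp: inner_diff_left scaleR_diff_left)

lemma norm_sq_eq_sum_block_proj:
  fixes x :: "'p::euclidean_space"
  assumes "finite I" and "\<forall>b\<in>Basis. own b \<in> I"
  shows "(norm x)\<^sup>2 = (\<Sum>k\<in>I. (norm (block_proj own k x))\<^sup>2)"
proof -
  have norm_sq: "(norm y)\<^sup>2 = (\<Sum>b\<in>Basis. (y \<bullet> b)\<^sup>2)" for y :: 'p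
    unfolding power2_norm_eq_inner by (subst euclidean_inner) (simp add: power2_eq_square)
  have "(\<Sum>k\<in>I. (norm (block_proj own k x))\<^sup>2)
      = (\<Sum>k\<in>I. \<Sum>b\<in>Basis. if own b = k then (x \<bullet> b)\<^sup>2 else 0)"
    by (intro sum.cong refl) (simp add: norm_sq inner_block_proj if_distrib[of "\<lambda>z. z\<^sup>2"] cong: if_cong)
  also have "\<dots> = (\<Sum>b\<in>Basis. \<Sum>k\<in>I. if own b = k then (x \<bullet> b)\<^sup>2 else 0)"
    by (rule sum.swap)
  also have "\<dots> = (norm x)\<^sup>2"
    using assms by (simp add: norm_sq sum.delta')
  finally show ?thesis
    by (rule sym)
qed

lemma cond_unbiased_of_blocks:
  assumes "\<forall>b\<in>Basis. own b \<in> I"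
    and "\<forall>k\<in>I. cond_unbiased M X (\<lambda>\<omega>. block_proj own k (G \<omega>)) (\<lambda>x. block_proj own k (h x))"
  shows "cond_unbiased M X G h"
  unfolding cond_unbiased_def
proof
  fix b :: 'a assume b: "b \<in> Basis"
  then have "cond_unbiased M X (\<lambda>\<omega>. block_proj own (own b) (G \<omega>)) (\<lambda>x. block_proj own (own b) (h x))"
    using assms by blast
  with b have "integrable M (\<lambda>\<omega>. block_proj own (own b) (G \<omega>) \<bullet> b) \<and>
      (AE \<omega> in M. real_cond_exp M (vimage_algebra (space M) X borel) (\<lambda>\<omega>. block_proj own (own b) (G \<omega>) \<bullet> b) \<omega>
        = block_proj own (own b) (h (X \<omega>)) \<bullet> b)"
    unfolding cond_unbiased_def by blast
  with b show "integrable M (\<lambda>\<omega>. G \<omega> \<bullet> b) \<and>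
      (AE \<omega> in M. real_cond_exp M (vimage_algebra (space M) X borel) (\<lambda>\<omega>. G \<omega> \<bullet> b) \<omega> = h (X \<omega>) \<bullet> b)"
    by (simp add: inner_block_proj)
qed

lemma block_second_moment_le:
  fixes U V :: "'w \<Rightarrow> 'p::euclidean_space"
  assumes "finite I" and "\<forall>b\<in>Basis. own b \<in> I"
    and int: "\<forall>k\<in>I. integrable M (\<lambda>\<omega>. (norm (block_proj own k (U \<omega>) - block_proj own k (V \<omega>)))\<^sup>2)"
    and le: "\<forall>k\<in>I. (\<integral>\<omega>. (norm (block_proj own k (U \<omega>) - block_proj own k (V \<omega>)))\<^sup>2 \<partial>M) \<le> c"
  shows "integrable M (\<lambda>\<omega>. (norm (U \<omega> - V \<omega>))\<^sup>2)"
    and "(\<integral>\<omega>. (norm (U \<omega> - V \<omega>))\<^sup>2 \<partial>M) \<le> real (card I) * c"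
proof -
  have split: "(\<lambda>\<omega>. (norm (U \<omega> - V \<omega>))\<^sup>2)
      = (\<lambda>\<omega>. \<Sum>k\<in>I. (norm (block_proj own k (U \<omega>) - block_proj own k (V \<omega>)))\<^sup>2)"
    unfolding block_proj_diff[symmetric] by (intro ext norm_sq_eq_sum_block_proj assms(1,2))
  show "integrable M (\<lambda>\<omega>. (norm (U \<omega> - V \<omega>))\<^sup>2)"
    unfolding split using int by auto
  have "(\<integral>\<omega>. (norm (U \<omega> - V \<omega>))\<^sup>2 \<partial>M)
      = (\<Sum>k\<in>I. \<integral>\<omega>. (norm (block_proj own k (U \<omega>) - block_proj own k (V \<omega>)))\<^sup>2 \<partial>M)"
    unfolding split using int by (intro Bochner_Integration.integral_sum) auto
  also have "\<dots> \<le> (\<Sum>k\<in>I. c)"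
    using le by (intro sum_mono) auto
  finally show "(\<integral>\<omega>. (norm (U \<omega> - V \<omega>))\<^sup>2 \<partial>M) \<le> real (card I) * c"
    by simp
qed

lemma integrable_mult_of_square_integrable:
  fixes f g :: "'a \<Rightarrow> real"
  assumes [measurable]: "f \<in> borel_measurable M" "g \<in> borel_measurable M"
    and "integrable M (\<lambda>x. (f x)\<^sup>2)" "integrable M (\<lambda>x. (g x)\<^sup>2)"
  shows "integrable M (\<lambda>x. f x * g x)"
proof (rule Bochner_Integration.integrable_bound)
  show "integrable M (\<lambda>x. (f x)\<^sup>2 + (g x)\<^sup>2)"
    using assms by simp
  show "AE x in M. norm (f x * g x) \<le> norm ((f x)\<^sup>2 + (g x)\<^sup>2)"
  proof (intro AE_I2)
    fix x
    have "2 * f x * g x \<le> (f x)\<^sup>2 + (g x)\<^sup>2" "2 * f x * - g x \<le> (f x)\<^sup>2 + (- g x)\<^sup>2"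
      by (rule sum_squares_bound)+
    then show "norm (f x * g x) \<le> norm ((f x)\<^sup>2 + (g x)\<^sup>2)"
      by (simp add: abs_le_iff)
  qed
qed measurable

lemma integrable_inner_Basis_square:
  fixes u :: "'a \<Rightarrow> 'p::euclidean_space"
  assumes [measurable]: "u \<in> borel_measurable M"
    and "integrable M (\<lambda>x. (norm (u x))\<^sup>2)" and "b \<in> Basis"
  shows "integrable M (\<lambda>x. (u x \<bullet> b)\<^sup>2)"
proof (rule Bochner_Integration.integrable_bound)
  show "integrable M (\<lambda>x. (norm (u x))\<^sup>2)"
    by fact
  show "AE x in M. norm ((u x \<bullet> b)\<^sup>2) \<le> norm ((norm (u x))\<^sup>2)"
    using Basis_le_norm[OF \<open>b \<in> Basis\<close>] by (intro AE_I2) (simp add: abs_le_square_iff[symmetric])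
qed measurable

lemma (in prob_space) integral_inner_cond_unbiased_error:
  fixes X G :: "'a \<Rightarrow> 'p::euclidean_space" and h :: "'p \<Rightarrow> 'p"
  assumes [measurable]: "X \<in> borel_measurable M" "G \<in> borel_measurable M" "h \<in> borel_measurable borel"
    and unbiased: "cond_unbiased M X G h"
    and int_h: "integrable M (\<lambda>\<omega>. (norm (h (X \<omega>)))\<^sup>2)"
    and int_err: "integrable M (\<lambda>\<omega>. (norm (G \<omega> - h (X \<omega>)))\<^sup>2)"
  shows "integrable M (\<lambda>\<omega>. h (X \<omega>) \<bullet> (G \<omega> - h (X \<omega>)))"
    and "(\<integral>\<omega>. h (X \<omega>) \<bullet> (G \<omega> - h (X \<omega>)) \<partial>M) = 0"
proof -
  let ?S = "vimage_algebra (space M) X borel"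
  have "finite_measure_subalgebra M ?S"
    by unfold_locales (use sets_image_in_sets[of M "space M" X borel] in \<open>auto simp: subalgebra_def\<close>)
  then interpret S: sigma_finite_subalgebra M ?S
    by (rule finite_measure_subalgebra_is_sigma_finite)
  define a where "a \<omega> = h (X \<omega>)" for \<omega>
  define e where "e \<omega> = G \<omega> - h (X \<omega>)" for \<omega>
  have [measurable]: "a \<in> borel_measurable M" "e \<in> borel_measurable M"
    unfolding a_def e_def by measurable
  have coordinate: "integrable M (\<lambda>\<omega>. (a \<omega> \<bullet> b) * (e \<omega> \<bullet> b)) \<and> (\<integral>\<omega>. (a \<omega> \<bullet> b) * (e \<omega> \<bullet> b) \<partial>M) = 0"
    if b: "b \<in> Basis" for b
  proof -
    have "integrable M (\<lambda>\<omega>. (a \<omega> \<bullet> b)\<^sup>2)" "integrable M (\<lambda>\<omega>. (e \<omega> \<bullet> b)\<^sup>2)"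
      using int_h int_err b unfolding a_def e_def by (auto intro: integrable_inner_Basis_square)
    then have int_ae: "integrable M (\<lambda>\<omega>. (a \<omega> \<bullet> b) * (e \<omega> \<bullet> b))"
      and int_aa: "integrable M (\<lambda>\<omega>. (a \<omega> \<bullet> b) * (a \<omega> \<bullet> b))"
      by (auto intro!: integrable_mult_of_square_integrable)
    have G_split: "(a \<omega> \<bullet> b) * (G \<omega> \<bullet> b) = (a \<omega> \<bullet> b) * (e \<omega> \<bullet> b) + (a \<omega> \<bullet> b) * (a \<omega> \<bullet> b)" for \<omega>
      by (simp add: a_def e_def inner_diff_left algebra_simps)
    have a_meas_S: "(\<lambda>\<omega>. a \<omega> \<bullet> b) \<in> borel_measurable ?S"
      unfolding a_def by (rule measurable_compose[OF measurable_vimage_algebra1]) auto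
    \<comment> \<open>a is a function of X, so conditioning on X leaves it in place\<close>
    have "(\<integral>\<omega>. (a \<omega> \<bullet> b) * (G \<omega> \<bullet> b) \<partial>M)
        = (\<integral>\<omega>. (a \<omega> \<bullet> b) * real_cond_exp M ?S (\<lambda>\<omega>. G \<omega> \<bullet> b) \<omega> \<partial>M)"
      using int_ae int_aa
      by (intro S.real_cond_exp_intg(2)[symmetric] a_meas_S) (auto simp: G_split)
    also have "\<dots> = (\<integral>\<omega>. (a \<omega> \<bullet> b) * (a \<omega> \<bullet> b) \<partial>M)"
      using unbiased b by (intro integral_cong_AE) (auto simp: cond_unbiased_def a_def)
    finally show ?thesis
      using int_ae int_aa unfolding G_split by simp
  qed
  have inner_eq: "h (X \<omega>) \<bullet> (G \<omega> - h (X \<omega>)) = (\<Sum>b\<in>Basis. (a \<omega> \<bullet> b) * (e \<omega> \<bullet> b))" for \<omega>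
    unfolding a_def e_def by (rule euclidean_inner)
  show "integrable M (\<lambda>\<omega>. h (X \<omega>) \<bullet> (G \<omega> - h (X \<omega>)))"
    unfolding inner_eq using coordinate by auto
  show "(\<integral>\<omega>. h (X \<omega>) \<bullet> (G \<omega> - h (X \<omega>)) \<partial>M) = 0"
    unfolding inner_eq using coordinate by (subst Bochner_Integration.integral_sum) auto
qed

lemma smooth_descent_perturbed_gradient:
  fixes F :: "'a::real_inner \<Rightarrow> real"
  assumes smooth: "\<forall>x y. F y \<le> F x + gradF x \<bullet> (y - x) + L / 2 * (norm (y - x))\<^sup>2"
    and "0 \<le> \<eta>" "0 \<le> L"
  shows "F (x - \<eta> *\<^sub>R (gradF x + e + d))
    \<le> F x - \<eta> / 2 * (norm (gradF x))\<^sup>2 - \<eta> * (gradF x \<bullet> e) + \<eta> / 2 * (norm d)\<^sup>2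
      + L * \<eta>\<^sup>2 * ((norm (gradF x))\<^sup>2 + 2 * (gradF x \<bullet> e) + (norm e)\<^sup>2 + (norm d)\<^sup>2)"
proof -
  let ?a = "gradF x" and ?v = "gradF x + e + d"
  have "F (x - \<eta> *\<^sub>R ?v) \<le> F x + ?a \<bullet> (- (\<eta> *\<^sub>R ?v)) + L / 2 * (norm (- (\<eta> *\<^sub>R ?v)))\<^sup>2"
    using smooth[rule_format, where x = x and y = "x - \<eta> *\<^sub>R ?v"] by simp
  also have "?a \<bullet> (- (\<eta> *\<^sub>R ?v)) = - \<eta> * ((norm ?a)\<^sup>2 + ?a \<bullet> e + ?a \<bullet> d)"
    by (simp add: inner_add_right power2_norm_eq_inner algebra_simps)
  also have "(norm (- (\<eta> *\<^sub>R ?v)))\<^sup>2 = \<eta>\<^sup>2 * (norm ?v)\<^sup>2"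
    by (simp add: power_mult_distrib)
  finally have "F (x - \<eta> *\<^sub>R ?v)
      \<le> F x - \<eta> * ((norm ?a)\<^sup>2 + ?a \<bullet> e + ?a \<bullet> d) + L / 2 * (\<eta>\<^sup>2 * (norm ?v)\<^sup>2)"
    by simp
  moreover have "- (?a \<bullet> d) \<le> ((norm ?a)\<^sup>2 + (norm d)\<^sup>2) / 2"
    using inner_ge_zero[of "?a + d"]
    by (simp add: power2_norm_eq_inner inner_add_left inner_add_right inner_commute)
  then have "\<eta> * - (?a \<bullet> d) \<le> \<eta> * (((norm ?a)\<^sup>2 + (norm d)\<^sup>2) / 2)"
    using \<open>0 \<le> \<eta>\<close> by (rule mult_left_mono)
  moreover have "(norm ?v)\<^sup>2 \<le> 2 * ((norm ?a)\<^sup>2 + 2 * (?a \<bullet> e) + (norm e)\<^sup>2 + (norm d)\<^sup>2)"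
    using inner_ge_zero[of "?a + e - d"]
    by (simp add: power2_norm_eq_inner inner_add_left inner_add_right inner_diff_left inner_diff_right inner_commute)
  then have "L / 2 * (\<eta>\<^sup>2 * (norm ?v)\<^sup>2)
      \<le> L / 2 * (\<eta>\<^sup>2 * (2 * ((norm ?a)\<^sup>2 + 2 * (?a \<bullet> e) + (norm e)\<^sup>2 + (norm d)\<^sup>2)))"
    using \<open>0 \<le> L\<close> by (intro mult_left_mono) auto
  ultimately show ?thesis
    by (simp add: algebra_simps)
qed

lemma (in prob_space) expected_smooth_descent:
  fixes F :: "'p::euclidean_space \<Rightarrow> real" and X Y G GA :: "'a \<Rightarrow> 'p"
  assumes smooth: "\<forall>x y. F y \<le> F x + gradF x \<bullet> (y - x) + L / 2 * (norm (y - x))\<^sup>2"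
    and F_nonneg: "\<forall>x. F x \<ge> 0"
    and [measurable]: "F \<in> borel_measurable borel" "gradF \<in> borel_measurable borel"
      "X \<in> borel_measurable M" "G \<in> borel_measurable M" "GA \<in> borel_measurable M"
    and Y: "\<forall>\<omega>\<in>space M. Y \<omega> = X \<omega> - \<eta> *\<^sub>R GA \<omega>"
    and "0 \<le> \<eta>" "0 \<le> L"
    and int_F: "integrable M (\<lambda>\<omega>. F (X \<omega>))"
    and int_grad: "integrable M (\<lambda>\<omega>. (norm (gradF (X \<omega>)))\<^sup>2)"
    and unbiased: "cond_unbiased M X G gradF"
    and int_err: "integrable M (\<lambda>\<omega>. (norm (G \<omega> - gradF (X \<omega>)))\<^sup>2)"
    and int_pert: "integrable M (\<lambda>\<omega>. (norm (GA \<omega> - G \<omega>))\<^sup>2)"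
  shows "integrable M (\<lambda>\<omega>. F (Y \<omega>))"
    and "(\<integral>\<omega>. F (Y \<omega>) \<partial>M) \<le> (\<integral>\<omega>. F (X \<omega>) \<partial>M)
      - \<eta> / 2 * (\<integral>\<omega>. (norm (gradF (X \<omega>)))\<^sup>2 \<partial>M) + \<eta> / 2 * (\<integral>\<omega>. (norm (GA \<omega> - G \<omega>))\<^sup>2 \<partial>M)
      + L * \<eta>\<^sup>2 * ((\<integral>\<omega>. (norm (gradF (X \<omega>)))\<^sup>2 \<partial>M) + (\<integral>\<omega>. (norm (G \<omega> - gradF (X \<omega>)))\<^sup>2 \<partial>M)
        + (\<integral>\<omega>. (norm (GA \<omega> - G \<omega>))\<^sup>2 \<partial>M))"
proof -
  define a where "a \<omega> = gradF (X \<omega>)" for \<omega>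
  define e where "e \<omega> = G \<omega> - gradF (X \<omega>)" for \<omega>
  define d where "d \<omega> = GA \<omega> - G \<omega>" for \<omega>
  have int_ae: "integrable M (\<lambda>\<omega>. a \<omega> \<bullet> e \<omega>)" and Eae: "(\<integral>\<omega>. a \<omega> \<bullet> e \<omega> \<partial>M) = 0"
    using integral_inner_cond_unbiased_error[OF _ _ _ unbiased int_grad int_err]
    unfolding a_def e_def by auto
  define R where "R \<omega> = F (X \<omega>) - \<eta> / 2 * (norm (a \<omega>))\<^sup>2 - \<eta> * (a \<omega> \<bullet> e \<omega>) + \<eta> / 2 * (norm (d \<omega>))\<^sup>2
    + L * \<eta>\<^sup>2 * ((norm (a \<omega>))\<^sup>2 + 2 * (a \<omega> \<bullet> e \<omega>) + (norm (e \<omega>))\<^sup>2 + (norm (d \<omega>))\<^sup>2)" for \<omega>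
  have FY_le: "F (Y \<omega>) \<le> R \<omega>" if "\<omega> \<in> space M" for \<omega>
  proof -
    have "Y \<omega> = X \<omega> - \<eta> *\<^sub>R (gradF (X \<omega>) + e \<omega> + d \<omega>)"
      using Y that by (simp add: e_def d_def)
    then show ?thesis
      using smooth_descent_perturbed_gradient[OF smooth \<open>0 \<le> \<eta>\<close> \<open>0 \<le> L\<close>, of "X \<omega>" "e \<omega>" "d \<omega>"]
      by (simp add: R_def a_def)
  qed
  have int_R: "integrable M R"
    using int_F int_grad int_err int_pert int_ae unfolding R_def a_def e_def d_def by simp
  have "(\<lambda>\<omega>. F (X \<omega> - \<eta> *\<^sub>R GA \<omega>)) \<in> borel_measurable M"
    by measurable
  then have [measurable]: "(\<lambda>\<omega>. F (Y \<omega>)) \<in> borel_measurable M"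
    by (rule measurable_cong[THEN iffD1, rotated]) (simp add: Y)
  show int_FY: "integrable M (\<lambda>\<omega>. F (Y \<omega>))"
    by (rule Bochner_Integration.integrable_bound[OF int_R])
      (use FY_le F_nonneg in \<open>auto intro!: AE_I2 intro: order_trans[OF _ abs_ge_self]\<close>)
  have "(\<integral>\<omega>. F (Y \<omega>) \<partial>M) \<le> (\<integral>\<omega>. R \<omega> \<partial>M)"
    by (rule integral_mono[OF int_FY int_R FY_le])
  also have "\<dots> = (\<integral>\<omega>. F (X \<omega>) \<partial>M)
      - \<eta> / 2 * (\<integral>\<omega>. (norm (a \<omega>))\<^sup>2 \<partial>M) + \<eta> / 2 * (\<integral>\<omega>. (norm (d \<omega>))\<^sup>2 \<partial>M)
      + L * \<eta>\<^sup>2 * ((\<integral>\<omega>. (norm (a \<omega>))\<^sup>2 \<partial>M) + (\<integral>\<omega>. (norm (e \<omega>))\<^sup>2 \<partial>M) + (\<integral>\<omega>. (norm (d \<omega>))\<^sup>2 \<partial>M))"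
    using int_F int_grad int_err int_pert int_ae Eae
    unfolding R_def a_def e_def d_def by simp
  finally show "(\<integral>\<omega>. F (Y \<omega>) \<partial>M) \<le> (\<integral>\<omega>. F (X \<omega>) \<partial>M)
      - \<eta> / 2 * (\<integral>\<omega>. (norm (gradF (X \<omega>)))\<^sup>2 \<partial>M) + \<eta> / 2 * (\<integral>\<omega>. (norm (GA \<omega> - G \<omega>))\<^sup>2 \<partial>M)
      + L * \<eta>\<^sup>2 * ((\<integral>\<omega>. (norm (gradF (X \<omega>)))\<^sup>2 \<partial>M) + (\<integral>\<omega>. (norm (G \<omega> - gradF (X \<omega>)))\<^sup>2 \<partial>M)
        + (\<integral>\<omega>. (norm (GA \<omega> - G \<omega>))\<^sup>2 \<partial>M))"
    unfolding a_def e_def d_def .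
qed

lemma (in prob_space) expected_descent_step:
  fixes F :: "'p::euclidean_space \<Rightarrow> real" and X Y G GA :: "'a \<Rightarrow> 'p"
  assumes smooth: "\<forall>x y. F y \<le> F x + gradF x \<bullet> (y - x) + L / 2 * (norm (y - x))\<^sup>2"
    and F_nonneg: "\<forall>x. F x \<ge> 0"
    and meas: "F \<in> borel_measurable borel" "gradF \<in> borel_measurable borel"
      "X \<in> borel_measurable M" "G \<in> borel_measurable M" "GA \<in> borel_measurable M"
    and Y: "\<forall>\<omega>\<in>space M. Y \<omega> = X \<omega> - \<eta> *\<^sub>R GA \<omega>"
    and L: "0 < L" and \<eta>: "0 < \<eta>" "\<eta> \<le> 1 / (4 * L)"
    and int_F: "integrable M (\<lambda>\<omega>. F (X \<omega>))"
    and int_grad: "integrable M (\<lambda>\<omega>. (norm (gradF (X \<omega>)))\<^sup>2)"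
    and unbiased: "cond_unbiased M X G gradF"
    and int_err: "integrable M (\<lambda>\<omega>. (norm (G \<omega> - gradF (X \<omega>)))\<^sup>2)"
    and err_le: "(\<integral>\<omega>. (norm (G \<omega> - gradF (X \<omega>)))\<^sup>2 \<partial>M) \<le> A"
    and int_pert: "integrable M (\<lambda>\<omega>. (norm (GA \<omega> - G \<omega>))\<^sup>2)"
    and pert_le: "(\<integral>\<omega>. (norm (GA \<omega> - G \<omega>))\<^sup>2 \<partial>M) \<le> D"
  shows "integrable M (\<lambda>\<omega>. F (Y \<omega>))"
    and "\<eta> / 4 * (\<integral>\<omega>. (norm (gradF (X \<omega>)))\<^sup>2 \<partial>M)
      \<le> (\<integral>\<omega>. F (X \<omega>) \<partial>M) - (\<integral>\<omega>. F (Y \<omega>) \<partial>M) + L * \<eta>\<^sup>2 * (A + D) + \<eta> / 2 * D"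
proof -
  have "0 \<le> \<eta>" "0 \<le> L"
    using L \<eta> by simp_all
  note descent = expected_smooth_descent[OF smooth F_nonneg meas Y this int_F int_grad unbiased int_err int_pert]
  then show "integrable M (\<lambda>\<omega>. F (Y \<omega>))"
    by blast
  define Ea Ee Ed where "Ea = (\<integral>\<omega>. (norm (gradF (X \<omega>)))\<^sup>2 \<partial>M)"
    and "Ee = (\<integral>\<omega>. (norm (G \<omega> - gradF (X \<omega>)))\<^sup>2 \<partial>M)" and "Ed = (\<integral>\<omega>. (norm (GA \<omega> - G \<omega>))\<^sup>2 \<partial>M)"
  have "L * \<eta>\<^sup>2 \<le> \<eta> / 4"
    using L \<eta> by (simp add: power2_eq_square field_simps)
  then have "L * \<eta>\<^sup>2 * Ea \<le> \<eta> / 4 * Ea"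
    by (rule mult_right_mono) (simp add: Ea_def)
  moreover have "L * \<eta>\<^sup>2 * (Ee + Ed) \<le> L * \<eta>\<^sup>2 * (A + D)" "\<eta> / 2 * Ed \<le> \<eta> / 2 * D"
    using err_le pert_le L \<eta> unfolding Ee_def Ed_def
    by (auto intro!: mult_left_mono add_mono)
  ultimately show "\<eta> / 4 * (\<integral>\<omega>. (norm (gradF (X \<omega>)))\<^sup>2 \<partial>M)
      \<le> (\<integral>\<omega>. F (X \<omega>) \<partial>M) - (\<integral>\<omega>. F (Y \<omega>) \<partial>M) + L * \<eta>\<^sup>2 * (A + D) + \<eta> / 2 * D"
    using descent(2) unfolding Ea_def Ee_def Ed_def by (simp add: algebra_simps)
qed

lemma (in prob_space) expected_descent_along_iterates:
  fixes F :: "'p::euclidean_space \<Rightarrow> real" and \<theta> g ga :: "nat \<Rightarrow> 'a \<Rightarrow> 'p"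
  assumes smooth: "\<forall>x y. F y \<le> F x + gradF x \<bullet> (y - x) + L / 2 * (norm (y - x))\<^sup>2"
    and F_nonneg: "\<forall>x. F x \<ge> 0"
    and [measurable]: "F \<in> borel_measurable borel" "gradF \<in> borel_measurable borel"
    and L: "0 < L"
    and init: "\<forall>\<omega>\<in>space M. \<theta> 0 \<omega> = \<theta>0"
    and iter: "\<forall>t<T. \<forall>\<omega>\<in>space M. \<theta> (Suc t) \<omega> = \<theta> t \<omega> - \<eta> t *\<^sub>R ga t \<omega>"
    and lr: "\<forall>t<T. 0 < \<eta> t \<and> \<eta> t \<le> 1 / (4 * L)"
    and g_meas: "\<forall>t<T. g t \<in> borel_measurable M"
    and ga_meas: "\<forall>t<T. ga t \<in> borel_measurable M"
    and int_grad: "\<forall>t<T. integrable M (\<lambda>\<omega>. (norm (gradF (\<theta> t \<omega>)))\<^sup>2)"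
    and unbiased: "\<forall>t<T. cond_unbiased M (\<theta> t) (g t) gradF"
    and int_err: "\<forall>t<T. integrable M (\<lambda>\<omega>. (norm (g t \<omega> - gradF (\<theta> t \<omega>)))\<^sup>2)"
    and err_le: "\<forall>t<T. (\<integral>\<omega>. (norm (g t \<omega> - gradF (\<theta> t \<omega>)))\<^sup>2 \<partial>M) \<le> A"
    and int_pert: "\<forall>t<T. integrable M (\<lambda>\<omega>. (norm (ga t \<omega> - g t \<omega>))\<^sup>2)"
    and pert_le: "\<forall>t<T. (\<integral>\<omega>. (norm (ga t \<omega> - g t \<omega>))\<^sup>2 \<partial>M) \<le> D"
  shows "\<forall>t<T. \<eta> t / 4 * (\<integral>\<omega>. (norm (gradF (\<theta> t \<omega>)))\<^sup>2 \<partial>M)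
    \<le> (\<integral>\<omega>. F (\<theta> t \<omega>) \<partial>M) - (\<integral>\<omega>. F (\<theta> (Suc t) \<omega>) \<partial>M) + L * (\<eta> t)\<^sup>2 * (A + D) + \<eta> t / 2 * D"
proof -
  have meas: "\<theta> t \<in> borel_measurable M" if "t \<le> T" for t
    using that
  proof (induction t)
    case 0
    show ?case
      by (rule measurable_cong[THEN iffD2, OF _ measurable_const]) (use init in auto)
  next
    case (Suc t)
    then have [measurable]: "\<theta> t \<in> borel_measurable M" "ga t \<in> borel_measurable M"
      using ga_meas by auto
    have "(\<lambda>\<omega>. \<theta> t \<omega> - \<eta> t *\<^sub>R ga t \<omega>) \<in> borel_measurable M"
      by measurable
    then show ?case
      by (rule measurable_cong[THEN iffD1, rotated]) (use iter Suc.prems in auto)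
  qed
  note step = expected_descent_step[OF smooth F_nonneg \<open>F \<in> _\<close> \<open>gradF \<in> _\<close> meas _ _ _ L]
  have step_at: "integrable M (\<lambda>\<omega>. F (\<theta> (Suc t) \<omega>)) \<and>
      \<eta> t / 4 * (\<integral>\<omega>. (norm (gradF (\<theta> t \<omega>)))\<^sup>2 \<partial>M)
      \<le> (\<integral>\<omega>. F (\<theta> t \<omega>) \<partial>M) - (\<integral>\<omega>. F (\<theta> (Suc t) \<omega>) \<partial>M) + L * (\<eta> t)\<^sup>2 * (A + D) + \<eta> t / 2 * D"
    if "t < T" "integrable M (\<lambda>\<omega>. F (\<theta> t \<omega>))" for t
    using step[of t "g t" "ga t" "\<theta> (Suc t)" "\<eta> t"] that
      g_meas ga_meas iter lr int_grad unbiased int_err err_le int_pert pert_le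
    by auto
  have int_F: "integrable M (\<lambda>\<omega>. F (\<theta> t \<omega>))" if "t \<le> T" for t
    using that
  proof (induction t)
    case 0
    show ?case
      by (rule Bochner_Integration.integrable_cong[THEN iffD2, OF refl _ integrable_const]) (use init in auto)
  next
    case (Suc t)
    then show ?case
      using step_at[of t] by simp
  qed
  show ?thesis
    using step_at int_F by simp
qed

lemma Min_le_of_telescoping_descent:
  fixes a E \<eta> :: "nat \<Rightarrow> real"
  assumes "0 < T" and pos: "\<forall>t<T. 0 < \<eta> t"
    and descent: "\<forall>t<T. \<eta> t * a t \<le> E t - E (Suc t) + (\<eta> t)\<^sup>2 * C + \<eta> t * D"
    and "0 \<le> E T"
  shows "Min (a ` {..<T}) \<le> E 0 / (\<Sum>t<T. \<eta> t) + (\<Sum>t<T. (\<eta> t)\<^sup>2) / (\<Sum>t<T. \<eta> t) * C + D"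
proof -
  define S where "S = (\<Sum>t<T. \<eta> t)"
  have "0 < S"
    unfolding S_def using assms by (intro sum_pos) auto
  have "S * Min (a ` {..<T}) = (\<Sum>t<T. \<eta> t * Min (a ` {..<T}))"
    by (simp add: S_def sum_distrib_right)
  also have "\<dots> \<le> (\<Sum>t<T. \<eta> t * a t)"
    using pos by (intro sum_mono mult_left_mono) auto
  also have "\<dots> \<le> (\<Sum>t<T. E t - E (Suc t) + (\<eta> t)\<^sup>2 * C + \<eta> t * D)"
    using descent by (intro sum_mono) auto
  also have "\<dots> = E 0 - E T + (\<Sum>t<T. (\<eta> t)\<^sup>2) * C + S * D"
    by (simp add: S_def sum.distrib sum_lessThan_telescope' sum_distrib_right)
  finally show ?thesis
    using \<open>0 < S\<close> \<open>0 \<le> E T\<close> by (simp add: S_def field_simps)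
qed

lemma (in prob_space) Min_expected_sq_gradient_le:
  fixes F :: "'p::euclidean_space \<Rightarrow> real" and \<theta> g ga :: "nat \<Rightarrow> 'a \<Rightarrow> 'p"
  assumes smooth: "\<forall>x y. F y \<le> F x + gradF x \<bullet> (y - x) + L / 2 * (norm (y - x))\<^sup>2"
    and F_nonneg: "\<forall>x. F x \<ge> 0"
    and [measurable]: "F \<in> borel_measurable borel" "gradF \<in> borel_measurable borel"
    and L: "0 < L" and T: "0 < T"
    and init: "\<forall>\<omega>\<in>space M. \<theta> 0 \<omega> = \<theta>0"
    and iter: "\<forall>t<T. \<forall>\<omega>\<in>space M. \<theta> (Suc t) \<omega> = \<theta> t \<omega> - \<eta> t *\<^sub>R ga t \<omega>"
    and lr: "\<forall>t<T. 0 < \<eta> t \<and> \<eta> t \<le> 1 / (4 * L)"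
    and g_meas: "\<forall>t<T. g t \<in> borel_measurable M"
    and ga_meas: "\<forall>t<T. ga t \<in> borel_measurable M"
    and unbiased: "\<forall>t<T. cond_unbiased M (\<theta> t) (g t) gradF"
    and int_err: "\<forall>t<T. integrable M (\<lambda>\<omega>. (norm (g t \<omega> - gradF (\<theta> t \<omega>)))\<^sup>2)"
    and err_le: "\<forall>t<T. (\<integral>\<omega>. (norm (g t \<omega> - gradF (\<theta> t \<omega>)))\<^sup>2 \<partial>M) \<le> A"
    and int_pert: "\<forall>t<T. integrable M (\<lambda>\<omega>. (norm (ga t \<omega> - g t \<omega>))\<^sup>2)"
    and pert_le: "\<forall>t<T. (\<integral>\<omega>. (norm (ga t \<omega> - g t \<omega>))\<^sup>2 \<partial>M) \<le> D"
  shows "Min ((\<lambda>t. \<integral>\<omega>. (norm (gradF (\<theta> t \<omega>)))\<^sup>2 \<partial>M) ` {..<T})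
    \<le> 4 * F \<theta>0 / (\<Sum>t<T. \<eta> t) + 4 * (\<Sum>t<T. (\<eta> t)\<^sup>2) / (\<Sum>t<T. \<eta> t) * (L * A + L * D) + 2 * D"
proof -
  define a where "a t = (\<integral>\<omega>. (norm (gradF (\<theta> t \<omega>)))\<^sup>2 \<partial>M)" for t
  define EF where "EF t = (\<integral>\<omega>. F (\<theta> t \<omega>) \<partial>M)" for t
  have Min_le: "Min (a ` {..<T}) \<le> a t" if "t < T" for t
    using that by simp
  show ?thesis
  proof (cases "\<forall>t<T. integrable M (\<lambda>\<omega>. (norm (gradF (\<theta> t \<omega>)))\<^sup>2)")
    case False
    have bound_nonneg: "0 \<le> c" if "(\<integral>\<omega>. (norm (u \<omega>))\<^sup>2 \<partial>M) \<le> c" for u :: "'a \<Rightarrow> 'p" and c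
      by (rule order_trans[OF _ that]) (simp add: Bochner_Integration.integral_nonneg)
    have "0 \<le> A" "0 \<le> D"
      using bound_nonneg[OF err_le[rule_format, OF T]] bound_nonneg[OF pert_le[rule_format, OF T]] .
    moreover have "0 \<le> (\<Sum>t<T. \<eta> t)" "0 \<le> F \<theta>0"
      using lr F_nonneg by (auto intro: sum_nonneg less_imp_le)
    ultimately have "0 \<le> 4 * F \<theta>0 / (\<Sum>t<T. \<eta> t) + 4 * (\<Sum>t<T. (\<eta> t)\<^sup>2) / (\<Sum>t<T. \<eta> t) * (L * A + L * D) + 2 * D"
      using L by (simp add: sum_nonneg)
    \<comment> \<open>a non-integrable squared gradient has the junk integral 0, which bounds the minimum\<close>
    moreover obtain t where "t < T" "a t = 0"
      using False unfolding a_def using not_integrable_integral_eq by blast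
    then have "Min (a ` {..<T}) \<le> 0"
      using Min_le by metis
    ultimately show ?thesis
      unfolding a_def by linarith
  next
    case True
    have "\<forall>t<T. \<eta> t / 4 * a t \<le> EF t - EF (Suc t) + L * (\<eta> t)\<^sup>2 * (A + D) + \<eta> t / 2 * D"
      unfolding a_def EF_def
      by (rule expected_descent_along_iterates[OF smooth F_nonneg \<open>F \<in> _\<close> \<open>gradF \<in> _\<close> L init iter lr
            g_meas ga_meas True unbiased int_err err_le int_pert pert_le])
    then have "\<forall>t<T. \<eta> t * a t \<le> 4 * EF t - 4 * EF (Suc t) + (\<eta> t)\<^sup>2 * (4 * (L * A + L * D)) + \<eta> t * (2 * D)"
      by (simp add: field_simps)
    moreover have "0 \<le> EF T"
      unfolding EF_def using F_nonneg by (simp add: Bochner_Integration.integral_nonneg)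
    ultimately have "Min (a ` {..<T}) \<le> 4 * EF 0 / (\<Sum>t<T. \<eta> t)
        + (\<Sum>t<T. (\<eta> t)\<^sup>2) / (\<Sum>t<T. \<eta> t) * (4 * (L * A + L * D)) + 2 * D"
      using lr by (intro Min_le_of_telescoping_descent[OF T]) auto
    moreover have "EF 0 = F \<theta>0"
    proof -
      have "EF 0 = (\<integral>\<omega>. F \<theta>0 \<partial>M)"
        unfolding EF_def by (rule Bochner_Integration.integral_cong) (use init in auto)
      then show ?thesis
        by (simp add: prob_space)
    qed
    ultimately show ?thesis
      unfolding a_def by (simp add: field_simps)
  qed
qed

theorem theorem1:
  fixes M :: "'w measure"
    and F :: "'p::euclidean_space \<Rightarrow> real"
    and gradF :: "'p \<Rightarrow> 'p"
    and K :: nat and own :: "'p \<Rightarrow> nat"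
    and L \<Gamma> :: real
    and \<delta> :: "'r \<Rightarrow> real" and \<rho> :: 'r
    and \<theta> :: "nat \<Rightarrow> 'w \<Rightarrow> 'p" and \<theta>0 :: 'p
    and g ga :: "nat \<Rightarrow> 'w \<Rightarrow> 'p"
    and \<eta> :: "nat \<Rightarrow> real" and T :: nat
  assumes prob: "prob_space M"
    and K: "K \<ge> 2"
    and ownership: "\<forall>b\<in>Basis. own b \<in> {1..K}"
    and F_nonneg: "\<forall>x. F x \<ge> 0"
    and grad: "\<forall>x. GDERIV F x :> gradF x"
    and L_pos: "L > 0"
    and smooth: "\<forall>x y. F y \<le> F x + gradF x \<bullet> (y - x) + L / 2 * (norm (y - x))\<^sup>2"
    and delta_nonneg: "\<delta> \<rho> \<ge> 0"
    and T: "T > 0"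
    and init: "\<forall>\<omega>\<in>space M. \<theta> 0 \<omega> = \<theta>0"
    and iter: "\<forall>t<T. \<forall>\<omega>\<in>space M. \<theta> (Suc t) \<omega> = \<theta> t \<omega> - \<eta> t *\<^sub>R ga t \<omega>"
    and lr: "\<forall>t<T. 0 < \<eta> t \<and> \<eta> t \<le> 1 / (4 * L)"
    and g_meas: "\<forall>t<T. g t \<in> borel_measurable M"
    and ga_meas: "\<forall>t<T. ga t \<in> borel_measurable M"
    and unbiased: "\<forall>t<T. \<forall>k\<in>{1..K}.
        cond_unbiased M (\<theta> t) (\<lambda>\<omega>. block_proj own k (g t \<omega>)) (\<lambda>x. block_proj own k (gradF x))"
    and var_int: "\<forall>t<T. \<forall>k\<in>{1..K}.
        integrable M (\<lambda>\<omega>. (norm (block_proj own k (g t \<omega>) - block_proj own k (gradF (\<theta> t \<omega>))))\<^sup>2)"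
    and var: "\<forall>t<T. \<forall>k\<in>{1..K}.
        (\<integral>\<omega>. (norm (block_proj own k (g t \<omega>) - block_proj own k (gradF (\<theta> t \<omega>))))\<^sup>2 \<partial>M) \<le> \<Gamma>"
    and pert_int: "\<forall>t<T. \<forall>k\<in>{1..K}.
        integrable M (\<lambda>\<omega>. (norm (block_proj own k (ga t \<omega>) - block_proj own k (g t \<omega>)))\<^sup>2)"
    and pert: "\<forall>t<T. \<forall>k\<in>{1..K}.
        (\<integral>\<omega>. (norm (block_proj own k (ga t \<omega>) - block_proj own k (g t \<omega>)))\<^sup>2 \<partial>M) \<le> \<delta> \<rho>"
  shows "Min ((\<lambda>t. \<integral>\<omega>. (norm (gradF (\<theta> t \<omega>)))\<^sup>2 \<partial>M) ` {..<T})
    \<le> 4 * F \<theta>0 / (\<Sum>t<T. \<eta> t)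
      + 4 * (\<Sum>t<T. (\<eta> t)\<^sup>2) / (\<Sum>t<T. \<eta> t) * (real K * L * \<Gamma> + real K * L * \<delta> \<rho>)
      + 2 * real K * \<delta> \<rho>"
proof -
  interpret prob_space M
    by (rule prob)
  have unbiased_full: "\<forall>t<T. cond_unbiased M (\<theta> t) (g t) gradF"
    using cond_unbiased_of_blocks[OF ownership] unbiased by blast
  have err: "integrable M (\<lambda>\<omega>. (norm (g t \<omega> - gradF (\<theta> t \<omega>)))\<^sup>2) \<and>
      (\<integral>\<omega>. (norm (g t \<omega> - gradF (\<theta> t \<omega>)))\<^sup>2 \<partial>M) \<le> real K * \<Gamma>" if "t < T" for t
    using block_second_moment_le[OF _ ownership var_int[THEN spec, THEN mp, OF that] var[THEN spec, THEN mp, OF that]]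
    by simp
  have pert: "integrable M (\<lambda>\<omega>. (norm (ga t \<omega> - g t \<omega>))\<^sup>2) \<and>
      (\<integral>\<omega>. (norm (ga t \<omega> - g t \<omega>))\<^sup>2 \<partial>M) \<le> real K * \<delta> \<rho>" if "t < T" for t
    using block_second_moment_le[OF _ ownership pert_int[THEN spec, THEN mp, OF that] pert[THEN spec, THEN mp, OF that]]
    by simp
  have "Min ((\<lambda>t. \<integral>\<omega>. (norm (gradF (\<theta> t \<omega>)))\<^sup>2 \<partial>M) ` {..<T})
      \<le> 4 * F \<theta>0 / (\<Sum>t<T. \<eta> t)
        + 4 * (\<Sum>t<T. (\<eta> t)\<^sup>2) / (\<Sum>t<T. \<eta> t) * (L * (real K * \<Gamma>) + L * (real K * \<delta> \<rho>))
        + 2 * (real K * \<delta> \<rho>)"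
    using err pert
    by (intro Min_expected_sq_gradient_le[OF smooth F_nonneg borel_measurable_gradient[OF grad] L_pos T
          init iter lr g_meas ga_meas unbiased_full]) auto
  then show ?thesis
    by (simp add: algebra_simps)
qed

end
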